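(* Let $\nu$ be a Krull valuation on $\mathbb{K}[x]$ and $Q$ a key polynomial for $\nu$ with $n=\deg Q$. Let $f=f_0+f_1Q+\dots+f_sQ^s$ where each $f_i\in\mathbb{K}[x]$ is either $0$ or a product of polynomials of degree smaller than $n$. Then $\nu_Q(f)=\min_{0\le i\le s}\{\nu(f_iQ^i)\}$.
   Context: Truncation: every $g\in\mathbb{K}[x]$ has a unique $Q$-expansion $g=g_0+g_1Q+\dots+g_tQ^t$ with $\deg g_i<\deg Q$; $\nu_Q(g)=\min_i\nu(g_iQ^i)$. Key polynomials: for nonzero $g$, with Hasse derivatives $\partial_bg=\sum_{i\ge b}\binom{i}{b}a_ix^{i-b}$ for $g=\sum a_ix^i$, $\epsilon(g)=\max_{1\le b\le\deg g}(\nu(g)-\nu(\partial_bg))/b$ if $\deg g>0$ and $\epsilon(g)=-\infty$ if $g$ is constant; a monic $Q$ is a key polynomial for $\nu$ if $\epsilon(g)\ge\epsilon(Q)$ implies $\deg g\ge\deg Q$ for all $g$. (For a key polynomial $Q$, $\nu_Q$ is a valuation.) *)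

theory Defs
  imports "HOL-Computational_Algebra.Polynomial" "HOL-Library.Extended"
begin

(* Values of a Krull valuation: Gamma \<union> {\<infinity>}, Gamma an ordered abelian group;
   we use 'g extended, where Pinf plays the role of \<infinity> (Minf is never taken). *)

definition krull_valuation :: "('a::field poly \<Rightarrow> 'g::linordered_ab_group_add extended) \<Rightarrow> bool" where
  "krull_valuation \<nu> \<longleftrightarrow>
     \<nu> 0 = Pinf \<and> \<nu> 1 = Fin 0 \<and>
     (\<forall>f. \<nu> f \<noteq> Minf) \<and>
     (\<forall>f. f \<noteq> 0 \<longrightarrow> \<nu> f \<noteq> Pinf) \<and>
     (\<forall>f g. \<nu> (f * g) = \<nu> f + \<nu> g) \<and>
     (\<forall>f g. min (\<nu> f) (\<nu> g) \<le> \<nu> (f + g))"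

fun nmul :: "nat \<Rightarrow> 'g::ab_group_add \<Rightarrow> 'g" where
  "nmul 0 x = 0"
| "nmul (Suc n) x = x + nmul n x"

definition hasse :: "nat \<Rightarrow> 'a::comm_ring_1 poly \<Rightarrow> 'a poly" where
  "hasse b g = (\<Sum>i\<in>{b..degree g}. monom (of_nat (i choose b) * coeff g i) (i - b))"

(* eps_ge \<nu> g h  means  \<epsilon>(g) \<ge> \<epsilon>(h), where
   \<epsilon>(g) = max_{1\<le>b\<le>deg g} (\<nu> g - \<nu>(\<partial>_b g))/b  (deg g > 0), \<epsilon>(g) = -\<infinity> (g constant).
   Terms with \<partial>_b g = 0 equal -\<infinity> and do not contribute to the max.
   The quotients live in the divisible hull of Gamma; (x/b \<ge> u/c) is expressed as c\<cdot>x \<ge> b\<cdot>u. *)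
definition eps_ge :: "('a::field poly \<Rightarrow> 'g::linordered_ab_group_add extended) \<Rightarrow> 'a poly \<Rightarrow> 'a poly \<Rightarrow> bool" where
  "eps_ge \<nu> g h \<longleftrightarrow>
     degree h = 0 \<or>
     (degree g > 0 \<and>
      (\<exists>b\<in>{1..degree g}. \<exists>x y. \<nu> g = Fin x \<and> \<nu> (hasse b g) = Fin y \<and>
         (\<forall>c\<in>{1..degree h}. \<forall>u w. \<nu> h = Fin u \<and> \<nu> (hasse c h) = Fin w \<longrightarrow>
              nmul b (u - w) \<le> nmul c (x - y))))"

definition key_poly :: "('a::field poly \<Rightarrow> 'g::linordered_ab_group_add extended) \<Rightarrow> 'a poly \<Rightarrow> bool" where
  "key_poly \<nu> Q \<longleftrightarrow> lead_coeff Q = 1 \<and>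
     (\<forall>g. g \<noteq> 0 \<longrightarrow> eps_ge \<nu> g Q \<longrightarrow> degree Q \<le> degree g)"

definition qexp :: "'a::field poly \<Rightarrow> 'a poly \<Rightarrow> nat \<Rightarrow> 'a poly" where
  "qexp Q g = (THE c. (\<forall>i. degree (c i) < degree Q) \<and> finite {i. c i \<noteq> 0} \<and>
                      g = (\<Sum>i\<in>{i. c i \<noteq> 0}. c i * Q ^ i))"

definition truncation :: "('a::field poly \<Rightarrow> 'g::linordered_ab_group_add extended) \<Rightarrow> 'a poly \<Rightarrow> 'a poly \<Rightarrow> 'g extended" where
  "truncation \<nu> Q g = (if g = 0 then Pinf
      else Min ((\<lambda>i. \<nu> (qexp Q g i * Q ^ i)) ` {i. qexp Q g i \<noteq> 0}))"

end

theory Submission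
  imports Defs
begin

text \<open>Since Q is a key polynomial, every polynomial of degree less than deg Q has \<epsilon> < \<epsilon>(Q),
  and by the Leibniz rule for Hasse derivatives so does every product of such polynomials. For such
  a product h, the Hasse derivative of h = (h div Q) Q + h mod Q of an order b realising \<epsilon>(Q)
  forces \<nu>(h mod Q) = \<nu>(h) < \<nu>((h div Q) Q). Multiplying in the factors of f_i one at a time,
  the Q-expansion of f_i thus has a constant term of value \<nu>(f_i) and all other terms strictly
  larger. In the Q-expansion of f assembled from these, the coefficient of Q^k for k minimising
  \<nu>(f_k Q^k) is the constant term of f_k plus terms of strictly larger value, and no term falls
  below that minimum.\<close>

section \<open>Integer multiples in ordered groups\<close>

lemma nmul_right_distrib: "nmul k (x + y) = nmul k x + nmul k (y::'g::ab_group_add)"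
  by (induction k) (simp_all add: algebra_simps)

lemma nmul_right_diff_distrib: "nmul k (x - y) = nmul k x - nmul k (y::'g::ab_group_add)"
  by (induction k) (simp_all add: algebra_simps)

lemma nmul_left_distrib: "nmul (a + b) x = nmul a x + nmul b (x::'g::ab_group_add)"
  by (induction a) (simp_all add: algebra_simps)

lemma nmul_nmul: "nmul a (nmul b x) = nmul (a * b) (x::'g::ab_group_add)"
  by (induction a) (simp_all add: nmul_left_distrib)

lemma nmul_zero [simp]: "nmul k (0::'g::ab_group_add) = 0"
  by (induction k) simp_all

lemma nmul_mono: "x \<le> y \<Longrightarrow> nmul k x \<le> nmul k (y::'g::ordered_ab_group_add)"
  by (induction k) (simp_all add: add_mono)

lemma nmul_strict_mono: "x < y \<Longrightarrow> 0 < k \<Longrightarrow> nmul k x < nmul k (y::'g::ordered_ab_group_add)"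
proof (induction k)
  case (Suc k)
  then show ?case
    by (cases k) (auto intro: add_less_le_mono nmul_mono)
qed simp

lemma nmul_le_cancel_iff: "0 < k \<Longrightarrow> nmul k x \<le> nmul k y \<longleftrightarrow> x \<le> (y::'g::linordered_ab_group_add)"
  by (meson nmul_mono nmul_strict_mono not_le)

section \<open>Krull valuations\<close>

fun emul :: "nat \<Rightarrow> 'g::ab_group_add extended \<Rightarrow> 'g extended" where
  "emul k (Fin x) = Fin (nmul k x)"
| "emul k Pinf = Pinf"
| "emul k Minf = Minf"

lemma emul_add: "emul k (a + b) = emul k a + emul k b"
  by (cases a; cases b) (simp_all add: nmul_right_distrib)

lemma emul_le_cancel_iff:
  "0 < k \<Longrightarrow> emul k a \<le> emul k b \<longleftrightarrow> a \<le> (b::'g::linordered_ab_group_add extended)"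
  by (cases a; cases b) (simp_all add: nmul_le_cancel_iff)

lemma krull_valuation_emul:
  assumes "krull_valuation \<nu>" and "0 < k"
  shows "krull_valuation (\<lambda>f. emul k (\<nu> f))"
proof -
  have "emul k a = Minf \<longleftrightarrow> a = Minf" "emul k a = Pinf \<longleftrightarrow> a = Pinf"
    for a :: "'b::linordered_ab_group_add extended"
    by (cases a; simp)+
  moreover have "min (emul k a) (emul k b) = emul k (min a b)"
    for a b :: "'b::linordered_ab_group_add extended"
    using emul_le_cancel_iff[OF \<open>0 < k\<close>] by (metis min_def)
  ultimately show ?thesis
    using assms unfolding krull_valuation_def
    by (auto simp: emul_add emul_le_cancel_iff zero_extended_def)
qed

lemma Fin_add_le_less:
  "Fin a \<le> X \<Longrightarrow> Fin b < Y \<Longrightarrow> Fin (a + b) < X + (Y::'g::linordered_ab_group_add extended)"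
  by (cases X; cases Y) (auto intro: add_le_less_mono)

lemma Fin_add_less_le:
  "Fin a < X \<Longrightarrow> Fin b \<le> Y \<Longrightarrow> Fin (a + b) < X + (Y::'g::linordered_ab_group_add extended)"
  by (cases X; cases Y) (auto intro: add_less_le_mono)

locale krull_val =
  fixes \<nu> :: "'a::field poly \<Rightarrow> 'g::linordered_ab_group_add extended"
  assumes krull_valuation: "krull_valuation \<nu>"
begin

lemma val_zero [simp]: "\<nu> 0 = Pinf"
  using krull_valuation unfolding krull_valuation_def by blast

lemma val_one: "\<nu> 1 = 0"
  using krull_valuation unfolding krull_valuation_def zero_extended_def by blast

lemma val_mult: "\<nu> (f * g) = \<nu> f + \<nu> g"
  using krull_valuation unfolding krull_valuation_def by blast

lemma val_add_ge_min: "min (\<nu> f) (\<nu> g) \<le> \<nu> (f + g)"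
  using krull_valuation unfolding krull_valuation_def by blast

lemma val_eq_Pinf_iff [simp]: "\<nu> f = Pinf \<longleftrightarrow> f = 0"
  using krull_valuation unfolding krull_valuation_def by force

definition fin_val :: "'a poly \<Rightarrow> 'g" where
  "fin_val f = (case \<nu> f of Fin x \<Rightarrow> x | _ \<Rightarrow> 0)"

lemma val_Fin: "f \<noteq> 0 \<Longrightarrow> \<nu> f = Fin (fin_val f)"
  using krull_valuation unfolding krull_valuation_def fin_val_def
  by (cases "\<nu> f") auto

lemma val_less_Pinf_iff [simp]: "\<nu> f < Pinf \<longleftrightarrow> f \<noteq> 0"
  by (cases "f = 0") (simp_all add: val_Fin)

lemma val_uminus: "\<nu> (- f) = \<nu> f"
proof -
  obtain x where x: "\<nu> (- 1) = Fin x"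
    using val_Fin[of "- 1"] by auto
  have "Fin (x + x) = 0"
    using val_mult[of "- 1" "- 1"] x by (simp add: val_one)
  then have "x = 0"
    by (simp add: zero_extended_def)
  then show ?thesis
    using val_mult[of "- 1" f] x by (simp add: zero_extended_def[symmetric])
qed

lemma val_diff_ge_min: "min (\<nu> f) (\<nu> g) \<le> \<nu> (f - g)"
  using val_add_ge_min[of f "- g"] by (simp add: val_uminus)

lemma val_add_eq_left: "\<nu> f < \<nu> g \<Longrightarrow> \<nu> (f + g) = \<nu> f"
  using val_add_ge_min[of f g] val_diff_ge_min[of "f + g" g]
  by (auto simp: min_def split: if_splits)

lemma val_add_eq_of_min_less:
  assumes "f = g + h" and "min (\<nu> f) (\<nu> h) < \<nu> g"
  shows "\<nu> h = \<nu> f \<and> \<nu> f < \<nu> g"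
proof (cases "\<nu> h \<le> \<nu> f")
  case True
  with assms have "\<nu> h < \<nu> g" by simp
  with assms(1) have "\<nu> f = \<nu> h"
    using val_add_eq_left[of h g] by (simp add: add.commute)
  with \<open>\<nu> h < \<nu> g\<close> show ?thesis by simp
next
  case False
  with assms have "\<nu> f < \<nu> (- g)" by (simp add: val_uminus)
  with assms(1) have "\<nu> h = \<nu> f"
    using val_add_eq_left[of f "- g"] by simp
  with False show ?thesis by simp
qed

lemma val_sum_ge: "(\<And>i. i \<in> S \<Longrightarrow> t \<le> \<nu> (a i)) \<Longrightarrow> t \<le> \<nu> (sum a S)"
proof (induction S rule: infinite_finite_induct)
  case (insert x F)
  then have "t \<le> min (\<nu> (a x)) (\<nu> (sum a F))" by simp
  from order_trans[OF this val_add_ge_min] show ?case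
    using insert(1,2) by simp
qed simp_all

lemma val_sum_gt: "t \<noteq> Pinf \<Longrightarrow> (\<And>i. i \<in> S \<Longrightarrow> t < \<nu> (a i)) \<Longrightarrow> t < \<nu> (sum a S)"
proof (induction S rule: infinite_finite_induct)
  case (insert x F)
  then have "t < min (\<nu> (a x)) (\<nu> (sum a F))" by simp
  from less_le_trans[OF this val_add_ge_min] show ?case
    using insert(1,2) by simp
qed (simp_all add: less_le)

lemma val_sum_eq_term:
  assumes "finite S" and "i \<in> S" and "\<And>j. j \<in> S \<Longrightarrow> j \<noteq> i \<Longrightarrow> \<nu> (a i) < \<nu> (a j)"
  shows "\<nu> (sum a S) = \<nu> (a i)"
proof (cases "S - {i} = {}")
  case True
  with assms(2) have "S = {i}" by auto
  then show ?thesis by simp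
next
  case False
  then have "\<nu> (a i) \<noteq> Pinf"
    using assms(3) by fastforce
  then have "\<nu> (a i) < \<nu> (sum a (S - {i}))"
    using assms(3) by (intro val_sum_gt) auto
  then show ?thesis
    using assms(1,2) by (simp add: sum.remove val_add_eq_left)
qed

lemma val_mult_less_cancel_left:
  assumes "f \<noteq> 0"
  shows "\<nu> (f * g) < \<nu> (f * h) \<longleftrightarrow> \<nu> g < \<nu> h"
proof -
  obtain y where "\<nu> f = Fin y"
    using val_Fin[OF assms] by blast
  moreover have "Fin y + X < Fin y + Z \<longleftrightarrow> X < Z" for X Z :: "'g extended"
    by (cases X; cases Z) simp_all
  ultimately show ?thesis
    by (simp only: val_mult)
qed

lemma val_mult_less_cancel_right: "g \<noteq> 0 \<Longrightarrow> \<nu> (f * g) < \<nu> (h * g) \<longleftrightarrow> \<nu> f < \<nu> h"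
  using val_mult_less_cancel_left[of g f h] by (simp add: mult.commute)

end

section \<open>Hasse derivatives\<close>

lemma coeff_hasse: "coeff (hasse b g) k = of_nat ((k + b) choose b) * coeff g (k + b)"
proof -
  have "coeff (hasse b g) k =
      (\<Sum>i\<in>{b..degree g}. if i = k + b then of_nat (i choose b) * coeff g i else 0)"
    unfolding hasse_def coeff_sum coeff_monom by (rule sum.cong) auto
  also have "\<dots> = of_nat ((k + b) choose b) * coeff g (k + b)"
    by (auto simp: coeff_eq_0)
  finally show ?thesis .
qed

lemma hasse_0 [simp]: "hasse 0 g = g"
  by (rule poly_eqI) (simp add: coeff_hasse)

lemma hasse_diff: "hasse b (f - g) = hasse b f - hasse b g"
  by (rule poly_eqI) (simp add: coeff_hasse algebra_simps)

lemma hasse_eq_0: "degree g < b \<Longrightarrow> hasse b g = 0"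
  by (rule poly_eqI) (simp add: coeff_hasse coeff_eq_0)

lemma hasse_degree_monic: "lead_coeff Q = 1 \<Longrightarrow> hasse (degree Q) Q = 1"
  by (rule poly_eqI) (auto simp: coeff_hasse coeff_eq_0 coeff_1)

lemma coeff_hasse_mult_hasse:
  fixes f g :: "'a::comm_ring_1 poly"
  assumes "j \<le> b"
  shows "coeff (hasse j f * hasse (b - j) g) k =
    (\<Sum>u\<le>k + b. of_nat ((u choose j) * ((k + b - u) choose (b - j))) * (coeff f u * coeff g (k + b - u)))"
    (is "_ = (\<Sum>u\<le>k + b. ?F u)")
proof -
  have "coeff (hasse j f * hasse (b - j) g) k = (\<Sum>s\<le>k. ?F (s + j))"
    unfolding coeff_mult
  proof (rule sum.cong[OF refl])
    fix s assume "s \<in> {..k}"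
    then have "k + b - (s + j) = k - s + (b - j)"
      using assms by auto
    then show "coeff (hasse j f) s * coeff (hasse (b - j) g) (k - s) = ?F (s + j)"
      by (simp add: coeff_hasse algebra_simps)
  qed
  also have "\<dots> = (\<Sum>u\<in>{j..k + j}. ?F u)"
    by (rule sum.reindex_bij_witness[of _ "\<lambda>u. u - j" "\<lambda>s. s + j"]) auto
  also have "\<dots> = (\<Sum>u\<le>k + b. ?F u)"
  proof (rule sum.mono_neutral_left)
    show "\<forall>u\<in>{..k + b} - {j..k + j}. ?F u = 0"
    proof
      fix u assume u: "u \<in> {..k + b} - {j..k + j}"
      show "?F u = 0"
      proof (cases "u < j")
        case False
        with u assms have "k + b - u < b - j" by auto
        then show ?thesis by (simp add: binomial_eq_0)
      qed (simp add: binomial_eq_0)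
    qed
  qed (use assms in auto)
  finally show ?thesis .
qed

lemma hasse_mult: "hasse b (f * g) = (\<Sum>j\<le>b. hasse j f * hasse (b - j) (g::'a::comm_ring_1 poly))"
proof (rule poly_eqI)
  fix k
  define N where "N = k + b"
  have "coeff (hasse b (f * g)) k = (\<Sum>u\<le>N. of_nat (N choose b) * (coeff f u * coeff g (N - u)))"
    by (simp add: coeff_hasse coeff_mult N_def sum_distrib_left)
  also have "\<dots> = (\<Sum>u\<le>N. \<Sum>j\<le>b.
      of_nat ((u choose j) * ((N - u) choose (b - j))) * (coeff f u * coeff g (N - u)))"
  proof (rule sum.cong[OF refl])
    fix u assume "u \<in> {..N}"
    then have "N choose b = (\<Sum>j\<le>b. (u choose j) * ((N - u) choose (b - j)))"
      using vandermonde[of u "N - u" b] by simp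
    then show "of_nat (N choose b) * (coeff f u * coeff g (N - u)) = (\<Sum>j\<le>b.
        of_nat ((u choose j) * ((N - u) choose (b - j))) * (coeff f u * coeff g (N - u)))"
      by (simp add: sum_distrib_right of_nat_sum)
  qed
  also have "\<dots> = (\<Sum>j\<le>b. coeff (hasse j f * hasse (b - j) g) k)"
    by (subst sum.swap) (simp add: coeff_hasse_mult_hasse N_def)
  finally show "coeff (hasse b (f * g)) k = coeff (\<Sum>j\<le>b. hasse j f * hasse (b - j) g) k"
    by (simp add: coeff_sum)
qed

section \<open>Q-expansions\<close>

lemma degree_div_add_degree_le:
  fixes x y :: "'a::field poly"
  assumes "y \<noteq> 0" and "x div y \<noteq> 0"
  shows "degree (x div y) + degree y \<le> degree x"
proof -
  have D: "degree (x div y) + degree y = degree (x - x mod y)"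
    using assms by (simp add: degree_mult_eq minus_mod_eq_mult_div)
  show ?thesis
  proof (cases "x mod y = 0")
    case False
    then have "degree (x mod y) < degree (x - x mod y)"
      using degree_mod_less[OF assms(1), of x] D by linarith
    then show ?thesis
      using D degree_diff_le_max[of x "x mod y"] by linarith
  qed (use D in simp)
qed

definition is_qexp :: "'a::field poly \<Rightarrow> (nat \<Rightarrow> 'a poly) \<Rightarrow> nat \<Rightarrow> 'a poly \<Rightarrow> bool" where
  "is_qexp Q c N g \<longleftrightarrow>
     (\<forall>i. degree (c i) < degree Q) \<and> (\<forall>i>N. c i = 0) \<and> g = (\<Sum>i\<le>N. c i * Q ^ i)"

lemma is_qexp_degree_pos: "is_qexp Q c N g \<Longrightarrow> 0 < degree Q"
  unfolding is_qexp_def by (metis gr_implies_not0 neq0_conv)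

lemma is_qexp_mono:
  assumes "is_qexp Q c N g" and "N \<le> N'"
  shows "is_qexp Q c N' g"
proof -
  have "(\<Sum>i\<le>N. c i * Q ^ i) = (\<Sum>i\<le>N'. c i * Q ^ i)"
    using assms by (intro sum.mono_neutral_left) (auto simp: is_qexp_def)
  with assms show ?thesis by (auto simp: is_qexp_def)
qed

lemma qexp_coeffs_unique:
  fixes Q :: "'a::field poly"
  assumes "\<forall>i. degree (c i) < degree Q" and "\<forall>i. degree (d i) < degree Q"
    and "(\<Sum>i\<le>N. c i * Q ^ i) = (\<Sum>i\<le>N. d i * Q ^ i)"
  shows "i \<le> N \<Longrightarrow> c i = d i"
  using assms
proof (induction N arbitrary: c d i)
  case (Suc N)
  have split: "(\<Sum>i\<le>Suc N. x i * Q ^ i) = x 0 + Q * (\<Sum>i\<le>N. x (Suc i) * Q ^ i)" for x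
    by (simp only: sum.atMost_Suc_shift)
      (simp add: sum_distrib_left mult.assoc mult.left_commute del: sum.atMost_Suc)
  let ?X = "\<Sum>i\<le>N. c (Suc i) * Q ^ i" and ?Y = "\<Sum>i\<le>N. d (Suc i) * Q ^ i"
  have eq: "c 0 + Q * ?X = d 0 + Q * ?Y"
    using Suc.prems(4) split by metis
  then have "(c 0 + Q * ?X) mod Q = (d 0 + Q * ?Y) mod Q"
    by simp
  then have 0: "c 0 = d 0"
    using Suc.prems(2,3) by (simp add: mod_poly_less)
  have "Q \<noteq> 0"
    using Suc.prems(2) by auto
  with eq 0 have "?X = ?Y"
    by simp
  then have "\<forall>i\<le>N. c (Suc i) = d (Suc i)"
    using Suc.IH[of _ "c \<circ> Suc" "d \<circ> Suc"] Suc.prems(2,3) by simp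
  with 0 Suc.prems(1) show ?case
    by (cases i) auto
qed simp

lemma is_qexp_support: "is_qexp Q c N g \<Longrightarrow> {i. c i \<noteq> 0} \<subseteq> {..N}"
  unfolding is_qexp_def by (auto simp: not_less[symmetric])

lemma qexp_eqI:
  assumes "is_qexp Q c N g"
  shows "qexp Q g = c"
  unfolding qexp_def
proof (rule the_equality)
  have "finite {i. c i \<noteq> 0}"
    using is_qexp_support[OF assms] finite_subset by blast
  moreover have "(\<Sum>i\<in>{i. c i \<noteq> 0}. c i * Q ^ i) = (\<Sum>i\<le>N. c i * Q ^ i)"
    using is_qexp_support[OF assms] by (intro sum.mono_neutral_left) auto
  ultimately show "(\<forall>i. degree (c i) < degree Q) \<and> finite {i. c i \<noteq> 0} \<and>
      g = (\<Sum>i\<in>{i. c i \<noteq> 0}. c i * Q ^ i)"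
    using assms unfolding is_qexp_def by auto
next
  fix d assume d: "(\<forall>i. degree (d i) < degree Q) \<and> finite {i. d i \<noteq> 0} \<and>
      g = (\<Sum>i\<in>{i. d i \<noteq> 0}. d i * Q ^ i)"
  then obtain M where M: "\<forall>i\<in>{i. d i \<noteq> 0}. i \<le> M"
    using finite_nat_set_iff_bounded_le by blast
  define K where "K = max N M"
  have "{i. d i \<noteq> 0} \<subseteq> {..K}"
    using M by (auto simp: K_def)
  then have "(\<Sum>i\<in>{i. d i \<noteq> 0}. d i * Q ^ i) = (\<Sum>i\<le>K. d i * Q ^ i)"
    by (intro sum.mono_neutral_left) auto
  moreover have "\<forall>i>K. d i = 0"
    using M by (auto simp: K_def not_le[symmetric])
  ultimately have dK: "is_qexp Q d K g"
    using d unfolding is_qexp_def by auto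
  have cK: "is_qexp Q c K g"
    using is_qexp_mono[OF assms] by (simp add: K_def)
  show "d = c"
  proof
    fix i
    show "d i = c i"
    proof (cases "i \<le> K")
      case True
      with dK cK show ?thesis
        unfolding is_qexp_def using qexp_coeffs_unique[of d Q c K i] by auto
    next
      case False
      with dK cK show ?thesis
        unfolding is_qexp_def by auto
    qed
  qed
qed

lemma is_qexp_zero: "0 < degree Q \<Longrightarrow> is_qexp Q (\<lambda>_. 0) N 0"
  by (simp add: is_qexp_def)

lemma is_qexp_const: "degree p < degree Q \<Longrightarrow> is_qexp Q (\<lambda>i. if i = 0 then p else 0) 0 p"
  by (simp add: is_qexp_def)

lemma is_qexp_add:
  assumes "is_qexp Q c N g" and "is_qexp Q d N h"
  shows "is_qexp Q (\<lambda>i. c i + d i) N (g + h)"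
proof -
  have "degree (c i + d i) < degree Q" for i
    using assms degree_add_le_max[of "c i" "d i"] unfolding is_qexp_def
    by (metis le_less_trans max_less_iff_conj)
  with assms show ?thesis
    unfolding is_qexp_def by (simp add: sum.distrib algebra_simps)
qed

lemma is_qexp_sum:
  assumes "finite S" and "S \<noteq> {}" and "\<And>i. i \<in> S \<Longrightarrow> is_qexp Q (c i) N (g i)"
  shows "is_qexp Q (\<lambda>k. \<Sum>i\<in>S. c i k) N (\<Sum>i\<in>S. g i)"
  using assms
proof (induction S rule: finite_ne_induct)
  case (insert x F)
  then show ?case
    using is_qexp_add[of Q "c x" N "g x" "\<lambda>k. \<Sum>i\<in>F. c i k"] by simp
qed simp

definition qshift :: "nat \<Rightarrow> (nat \<Rightarrow> 'a::zero) \<Rightarrow> nat \<Rightarrow> 'a" where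
  "qshift i c k = (if k < i then 0 else c (k - i))"

lemma is_qexp_qshift:
  assumes "is_qexp Q c N g"
  shows "is_qexp Q (qshift i c) (N + i) (Q ^ i * g)"
proof -
  have "(\<Sum>k\<le>N + i. qshift i c k * Q ^ k) = (\<Sum>k\<in>{i..N + i}. c (k - i) * Q ^ k)"
    by (rule sum.mono_neutral_cong_right) (auto simp: qshift_def)
  also have "\<dots> = (\<Sum>k\<le>N. c k * Q ^ (k + i))"
    by (rule sum.reindex_bij_witness[of _ "\<lambda>k. k + i" "\<lambda>k. k - i"]) auto
  also have "\<dots> = Q ^ i * g"
    using assms by (simp add: is_qexp_def sum_distrib_left power_add algebra_simps)
  finally show ?thesis
    using assms is_qexp_degree_pos[OF assms] by (auto simp: is_qexp_def qshift_def)
qed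

lemma qshift_mult_power:
  fixes Q :: "'a::comm_semiring_1"
  assumes "i \<le> k"
  shows "qshift i c k * Q ^ k = c (k - i) * Q ^ (k - i) * Q ^ i"
proof -
  have "Q ^ k = Q ^ (k - i) * Q ^ i"
    by (subst power_add[symmetric]) (simp add: assms)
  with assms show ?thesis
    by (simp add: qshift_def mult.assoc)
qed

lemma is_qexp_sum_qshift:
  fixes s :: nat
  assumes "\<And>i. i \<le> s \<Longrightarrow> is_qexp Q (c i) N (fs i)"
  shows "is_qexp Q (\<lambda>k. \<Sum>i\<le>s. qshift i (c i) k) (N + s) (\<Sum>i\<le>s. fs i * Q ^ i)"
proof -
  have "is_qexp Q (qshift i (c i)) (N + s) (Q ^ i * fs i)" if "i \<le> s" for i
    using is_qexp_qshift[OF assms[OF that], of i] that by (auto intro: is_qexp_mono)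
  then have "is_qexp Q (\<lambda>k. \<Sum>i\<le>s. qshift i (c i) k) (N + s) (\<Sum>i\<le>s. Q ^ i * fs i)"
    by (intro is_qexp_sum) auto
  then show ?thesis
    by (simp add: mult.commute)
qed

lemma degree_mult_div_less:
  fixes p c Q :: "'a::field poly"
  assumes "degree p < degree Q" and "degree c < degree Q"
  shows "degree (p * c div Q) < degree Q"
proof (cases "p * c div Q = 0")
  case False
  have "Q \<noteq> 0"
    using assms by auto
  then have "degree (p * c div Q) + degree Q \<le> degree (p * c)"
    using False by (rule degree_div_add_degree_le)
  with degree_mult_le[of p c] assms show ?thesis
    by linarith
qed (use assms in simp)

lemma is_qexp_mult:
  fixes Q :: "'a::field poly"
  assumes c: "is_qexp Q c N h" and p: "degree p < degree Q"
  shows "is_qexp Q (\<lambda>k. p * c k mod Q + qshift 1 (\<lambda>k. p * c k div Q) k) (Suc N) (p * h)"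
proof -
  have Q: "Q \<noteq> 0"
    using is_qexp_degree_pos[OF c] by auto
  have "is_qexp Q (\<lambda>k. p * c k mod Q) N (\<Sum>k\<le>N. p * c k mod Q * Q ^ k)"
    using c degree_mod_less[OF Q] is_qexp_degree_pos[OF c]
    by (auto simp: is_qexp_def) (metis degree_0)
  then have mods: "is_qexp Q (\<lambda>k. p * c k mod Q) (Suc N) (\<Sum>k\<le>N. p * c k mod Q * Q ^ k)"
    by (rule is_qexp_mono) simp
  have "is_qexp Q (\<lambda>k. p * c k div Q) N (\<Sum>k\<le>N. p * c k div Q * Q ^ k)"
    using c p degree_mult_div_less by (auto simp: is_qexp_def)
  from is_qexp_qshift[OF this, of 1]
  have divs: "is_qexp Q (qshift 1 (\<lambda>k. p * c k div Q)) (Suc N) (Q * (\<Sum>k\<le>N. p * c k div Q * Q ^ k))"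
    by simp
  have distrib: "(\<Sum>k\<le>N. (A k * Q + B k) * Q ^ k) =
      (\<Sum>k\<le>N. B k * Q ^ k) + Q * (\<Sum>k\<le>N. A k * Q ^ k)" for A B :: "nat \<Rightarrow> 'a poly"
    by (simp add: algebra_simps sum.distrib sum_distrib_left)
  have "p * h = (\<Sum>k\<le>N. (p * c k div Q * Q + p * c k mod Q) * Q ^ k)"
    using c by (simp add: is_qexp_def sum_distrib_left mult.assoc)
  also have "\<dots> = (\<Sum>k\<le>N. p * c k mod Q * Q ^ k) + Q * (\<Sum>k\<le>N. p * c k div Q * Q ^ k)"
    by (rule distrib)
  finally show ?thesis
    using is_qexp_add[OF mods divs] by simp
qed

definition dominant_qexp ::
    "('a::field poly \<Rightarrow> 'g::linordered_ab_group_add extended) \<Rightarrow> 'a poly \<Rightarrow> (nat \<Rightarrow> 'a poly) \<Rightarrow> nat \<Rightarrow> 'a poly \<Rightarrow> bool" where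
  "dominant_qexp \<nu> Q c N h \<longleftrightarrow>
     is_qexp Q c N h \<and> \<nu> (c 0) = \<nu> h \<and> (\<forall>j>0. c j \<noteq> 0 \<longrightarrow> \<nu> h < \<nu> (c j * Q ^ j))"

lemma dominant_qexp_degree: "dominant_qexp \<nu> Q c N h \<Longrightarrow> degree (c j) < degree Q"
  by (simp add: dominant_qexp_def is_qexp_def)

lemma dominant_qexp_zero: "0 < degree Q \<Longrightarrow> dominant_qexp \<nu> Q (\<lambda>_. 0) N 0"
  by (simp add: dominant_qexp_def is_qexp_zero)

lemma dominant_qexp_const:
  "degree p < degree Q \<Longrightarrow> dominant_qexp \<nu> Q (\<lambda>i. if i = 0 then p else 0) 0 p"
  by (simp add: dominant_qexp_def is_qexp_const)

lemma dominant_qexp_mono: "dominant_qexp \<nu> Q c N h \<Longrightarrow> N \<le> N' \<Longrightarrow> dominant_qexp \<nu> Q c N' h"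
  unfolding dominant_qexp_def using is_qexp_mono by blast

lemma ex_dominant_qexps_common_bound:
  fixes s :: nat
  assumes "\<And>i. i \<le> s \<Longrightarrow> \<exists>c N. dominant_qexp \<nu> Q c N (fs i)"
  shows "\<exists>c N. \<forall>i\<le>s. dominant_qexp \<nu> Q (c i) N (fs i)"
proof -
  have "\<forall>i\<in>{..s}. \<exists>cN. dominant_qexp \<nu> Q (fst cN) (snd cN) (fs i)"
    using assms by auto
  then obtain cN where cN: "\<And>i. i \<le> s \<Longrightarrow> dominant_qexp \<nu> Q (fst (cN i)) (snd (cN i)) (fs i)"
    using bchoice[of "{..s}"] by (metis atMost_iff)
  have "dominant_qexp \<nu> Q (fst (cN i)) (Max ((snd \<circ> cN) ` {..s})) (fs i)" if "i \<le> s" for i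
    using that by (intro dominant_qexp_mono[OF cN] Max_ge) auto
  then show ?thesis
    by (intro exI[of _ "\<lambda>i. fst (cN i)"] exI[of _ "Max ((snd \<circ> cN) ` {..s})"]) blast
qed

context krull_val
begin

lemma dominant_qexp_val_le:
  assumes "dominant_qexp \<nu> Q c N h"
  shows "\<nu> h \<le> \<nu> (c j * Q ^ j)"
  using assms by (cases "j = 0"; cases "c j = 0") (auto simp: dominant_qexp_def less_imp_le)

lemma val_qshift_ge:
  assumes "dominant_qexp \<nu> Q c N h"
  shows "\<nu> (h * Q ^ i) \<le> \<nu> (qshift i c k * Q ^ k)"
proof (cases "i \<le> k")
  case True
  have "\<nu> (h * Q ^ i) \<le> \<nu> (c (k - i) * Q ^ (k - i) * Q ^ i)"
    using dominant_qexp_val_le[OF assms] by (simp add: val_mult add_right_mono)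
  with True show ?thesis
    by (simp add: qshift_mult_power)
qed (simp add: qshift_def)

lemma val_qshift_gt:
  assumes dom: "dominant_qexp \<nu> Q c N h"
    and t: "t \<le> \<nu> (h * Q ^ i)" "t \<noteq> Pinf" and "i \<noteq> k"
  shows "t < \<nu> (qshift i c k * Q ^ k)"
proof (cases "i < k \<and> c (k - i) \<noteq> 0")
  case True
  have "Q \<noteq> 0"
    using dom is_qexp_degree_pos by (force simp: dominant_qexp_def)
  from True dom have "\<nu> h < \<nu> (c (k - i) * Q ^ (k - i))"
    by (simp add: dominant_qexp_def)
  with \<open>Q \<noteq> 0\<close> True have "\<nu> (h * Q ^ i) < \<nu> (qshift i c k * Q ^ k)"
    by (simp add: qshift_mult_power val_mult_less_cancel_right)
  with t(1) show ?thesis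
    by simp
next
  case False
  with \<open>i \<noteq> k\<close> have "qshift i c k = 0"
    by (auto simp: qshift_def)
  with t(2) show ?thesis
    by (simp add: less_le)
qed

lemma val_qshift_eq:
  assumes "dominant_qexp \<nu> Q c N h"
  shows "\<nu> (qshift i c i * Q ^ i) = \<nu> (h * Q ^ i)"
  using assms by (simp add: dominant_qexp_def qshift_def val_mult)

lemma truncation_eqI:
  assumes a: "is_qexp Q a N f" and ge: "\<And>k. t \<le> \<nu> (a k * Q ^ k)" and eq: "\<nu> (a k0 * Q ^ k0) = t"
  shows "truncation \<nu> Q f = t"
proof -
  have Q: "Q \<noteq> 0"
    using is_qexp_degree_pos[OF a] by auto
  have qexp: "qexp Q f = a"
    by (rule qexp_eqI[OF a])
  show ?thesis
  proof (cases "a k0 = 0")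
    case True
    with eq have "t = Pinf"
      by simp
    with ge Q have "a k = 0" for k
      using ge[of k] by simp
    with a have "f = 0"
      by (simp add: is_qexp_def)
    with \<open>t = Pinf\<close> show ?thesis
      by (simp add: truncation_def)
  next
    case False
    have "f \<noteq> 0"
    proof
      assume "f = 0"
      with qexp qexp_eqI[OF is_qexp_zero[of Q N]] Q have "a = (\<lambda>_. 0)"
        using is_qexp_degree_pos[OF a] by simp
      with False show False
        by simp
    qed
    moreover have "Min ((\<lambda>i. \<nu> (a i * Q ^ i)) ` {i. a i \<noteq> 0}) = t"
    proof (rule Min_eqI)
      show "finite ((\<lambda>i. \<nu> (a i * Q ^ i)) ` {i. a i \<noteq> 0})"
        using is_qexp_support[OF a] finite_subset by blast
      show "t \<in> (\<lambda>i. \<nu> (a i * Q ^ i)) ` {i. a i \<noteq> 0}"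
        using eq False by force
    qed (use ge in auto)
    ultimately show ?thesis
      by (simp add: truncation_def qexp)
  qed
qed

lemma truncation_sum_dominant_qexp:
  fixes s :: nat
  assumes dom: "\<And>i. i \<le> s \<Longrightarrow> dominant_qexp \<nu> Q (c i) N (fs i)"
  shows "truncation \<nu> Q (\<Sum>i\<le>s. fs i * Q ^ i) = Min ((\<lambda>i. \<nu> (fs i * Q ^ i)) ` {..s})"
proof -
  define a where "a k = (\<Sum>i\<le>s. qshift i (c i) k)" for k
  define t where "t = Min ((\<lambda>i. \<nu> (fs i * Q ^ i)) ` {..s})"
  have t_le: "t \<le> \<nu> (fs i * Q ^ i)" if "i \<le> s" for i
    using that by (simp add: t_def)
  have "t \<in> (\<lambda>i. \<nu> (fs i * Q ^ i)) ` {..s}"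
    unfolding t_def by (rule Min_in) auto
  then obtain i0 where i0: "i0 \<le> s" "\<nu> (fs i0 * Q ^ i0) = t"
    by auto
  have exp: "is_qexp Q a (N + s) (\<Sum>i\<le>s. fs i * Q ^ i)"
    unfolding a_def using dom by (intro is_qexp_sum_qshift) (simp add: dominant_qexp_def)
  have terms: "a k * Q ^ k = (\<Sum>i\<le>s. qshift i (c i) k * Q ^ k)" for k
    by (simp add: a_def sum_distrib_right)
  have ge: "t \<le> \<nu> (a k * Q ^ k)" for k
    unfolding terms using t_le val_qshift_ge[OF dom] order_trans by (intro val_sum_ge) blast
  show ?thesis
    unfolding t_def[symmetric]
  proof (rule truncation_eqI[OF exp ge])
    show "\<nu> (a i0 * Q ^ i0) = t"
    proof (cases "t = Pinf")
      case True
      then show ?thesis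
        using ge[of i0] by simp
    next
      case False
      have "t < \<nu> (qshift i (c i) i0 * Q ^ i0)" if "i \<le> s" "i \<noteq> i0" for i
        using val_qshift_gt[OF dom[OF that(1)] t_le[OF that(1)] False that(2)] .
      then show ?thesis
        unfolding terms using i0 val_qshift_eq[OF dom] by (subst val_sum_eq_term[of _ i0]) auto
    qed
  qed
qed

end

section \<open>Key polynomials\<close>

locale key_polynomial = krull_val \<nu>
  for \<nu> :: "'a::field poly \<Rightarrow> 'g::linordered_ab_group_add extended" +
  fixes Q :: "'a poly"
  assumes key_poly: "key_poly \<nu> Q" and degree_Q_pos: "0 < degree Q"
begin

abbreviation n :: nat where "n \<equiv> degree Q"

lemma Q_nonzero: "Q \<noteq> 0"
  using degree_Q_pos by auto

text \<open>The quotients (\<nu> Q - \<nu> (hasse c Q)) / c defining \<epsilon>(Q) live in the divisible hull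
  of the value group. Multiplying everything by n! keeps them in the group: \<mu> = n! \<nu>,
  eps_term c = n! (\<nu> Q - \<nu> (hasse c Q)) / c and epsQ = n! \<epsilon>(Q); eps_less_Q h then
  expresses \<epsilon>(h) < \<epsilon>(Q).\<close>

definition scale :: nat where
  "scale = fact n"

definition \<mu> :: "'a poly \<Rightarrow> 'g extended" where
  "\<mu> f = emul scale (\<nu> f)"

definition hasse_indices :: "nat set" where
  "hasse_indices = {c\<in>{1..n}. hasse c Q \<noteq> 0}"

definition eps_term :: "nat \<Rightarrow> 'g" where
  "eps_term c = nmul (scale div c) (fin_val Q - fin_val (hasse c Q))"

definition epsQ :: 'g where
  "epsQ = Max (eps_term ` hasse_indices)"

lemma scale_pos: "0 < scale"
  by (simp add: scale_def)

lemma scale_div_mult: "c \<in> {1..n} \<Longrightarrow> c * (scale div c) = scale"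
  using dvd_fact[of c n] by (simp add: scale_def)

lemma scale_div_pos: "c \<in> {1..n} \<Longrightarrow> 0 < scale div c"
  using scale_div_mult[of c] scale_pos by (cases "scale div c = 0") simp_all

lemma nmul_scale:
  assumes "c \<in> {1..n}"
  shows "nmul scale x = nmul c (nmul (scale div c) x)"
    and "nmul scale x = nmul (scale div c) (nmul c x)"
  using scale_div_mult[OF assms] by (simp_all add: nmul_nmul mult.commute)

sublocale scaled: krull_val \<mu>
  unfolding \<mu>_def by unfold_locales (rule krull_valuation_emul[OF krull_valuation scale_pos])

lemma scaled_fin_val: "scaled.fin_val f = nmul scale (fin_val f)"
proof (cases "f = 0")
  case False
  then have "\<mu> f = Fin (nmul scale (fin_val f))"
    by (simp add: \<mu>_def val_Fin)
  then show ?thesis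
    by (simp add: scaled.fin_val_def)
qed (simp add: scaled.fin_val_def fin_val_def \<mu>_def)

lemma \<mu>_le_iff: "\<mu> f \<le> \<mu> g \<longleftrightarrow> \<nu> f \<le> \<nu> g"
  unfolding \<mu>_def by (rule emul_le_cancel_iff[OF scale_pos])

lemma hasse_indices_finite: "finite hasse_indices"
  by (simp add: hasse_indices_def)

lemma degree_in_hasse_indices: "n \<in> hasse_indices"
proof -
  have "hasse n Q = 1"
    using key_poly by (simp add: key_poly_def hasse_degree_monic)
  with degree_Q_pos show ?thesis
    by (simp add: hasse_indices_def)
qed

lemma nmul_eps_term:
  assumes "c \<in> hasse_indices"
  shows "nmul c (eps_term c) = scaled.fin_val Q - scaled.fin_val (hasse c Q)"
proof -
  have "c \<in> {1..n}"
    using assms by (simp add: hasse_indices_def)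
  then show ?thesis
    by (simp add: eps_term_def scaled_fin_val nmul_right_diff_distrib nmul_scale(1))
qed

lemma val_hasse_Q_ge: "Fin (scaled.fin_val Q - nmul j epsQ) \<le> \<mu> (hasse j Q)"
proof (cases "j \<in> hasse_indices")
  case True
  have "eps_term j \<le> epsQ"
    unfolding epsQ_def using True hasse_indices_finite by simp
  then have "nmul j (eps_term j) \<le> nmul j epsQ"
    by (rule nmul_mono)
  with True show ?thesis
    using scaled.val_Fin[of "hasse j Q"] nmul_eps_term[OF True]
    by (simp add: hasse_indices_def algebra_simps)
next
  case False
  then consider "j = 0" | "hasse j Q = 0"
    using hasse_eq_0[of Q j] by (force simp: hasse_indices_def)
  then show ?thesis
    by cases (simp_all add: scaled.val_Fin[OF Q_nonzero])
qed

lemma ex_val_hasse_Q_eq: "\<exists>b\<ge>1. \<mu> (hasse b Q) = Fin (scaled.fin_val Q - nmul b epsQ)"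
proof -
  have "epsQ \<in> eps_term ` hasse_indices"
    unfolding epsQ_def using hasse_indices_finite degree_in_hasse_indices by (intro Max_in) auto
  then obtain b where b: "b \<in> hasse_indices" "eps_term b = epsQ"
    by force
  then have "\<mu> (hasse b Q) = Fin (scaled.fin_val Q - nmul b epsQ)"
    using scaled.val_Fin[of "hasse b Q"] nmul_eps_term[OF b(1)] by (simp add: hasse_indices_def)
  with b(1) show ?thesis
    by (auto simp: hasse_indices_def)
qed

definition eps_less_Q :: "'a poly \<Rightarrow> bool" where
  "eps_less_Q h \<longleftrightarrow> h \<noteq> 0 \<and> (\<forall>j\<ge>1. Fin (scaled.fin_val h - nmul j epsQ) < \<mu> (hasse j h))"

lemma eps_less_Q_val_hasse_ge:
  "eps_less_Q h \<Longrightarrow> Fin (scaled.fin_val h - nmul j epsQ) \<le> \<mu> (hasse j h)"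
  by (cases "j = 0") (auto simp: eps_less_Q_def scaled.val_Fin less_imp_le)

lemma key_poly_hasse_witness:
  assumes h: "h \<noteq> 0" "degree h < n" and j: "1 \<le> j" "hasse j h \<noteq> 0"
  shows "\<exists>c\<in>hasse_indices.
    nmul c (fin_val h - fin_val (hasse j h)) < nmul j (fin_val Q - fin_val (hasse c Q))"
proof -
  have "j \<le> degree h"
    using j hasse_eq_0[of h j] by fastforce
  have "\<not> eps_ge \<nu> h Q"
    using key_poly h unfolding key_poly_def by (meson not_le)
  then have "\<not> (\<forall>c\<in>{1..n}. \<forall>u w. \<nu> Q = Fin u \<and> \<nu> (hasse c Q) = Fin w \<longrightarrow>
      nmul j (u - w) \<le> nmul c (fin_val h - fin_val (hasse j h)))"
    unfolding eps_ge_def using degree_Q_pos j \<open>j \<le> degree h\<close> val_Fin[OF h(1)] val_Fin[OF j(2)]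
    by auto
  then obtain c w where c: "c \<in> {1..n}" "\<nu> (hasse c Q) = Fin w"
      "nmul c (fin_val h - fin_val (hasse j h)) < nmul j (fin_val Q - w)"
    using val_Fin[OF Q_nonzero] by (auto simp: not_le)
  then have "hasse c Q \<noteq> 0"
    by auto
  with c show ?thesis
    using val_Fin[of "hasse c Q"] by (auto simp: hasse_indices_def)
qed

lemma eps_less_Q_if_degree_less:
  assumes h: "h \<noteq> 0" "degree h < n"
  shows "eps_less_Q h"
  unfolding eps_less_Q_def
proof (intro conjI allI impI h(1))
  fix j :: nat assume j: "1 \<le> j"
  show "Fin (scaled.fin_val h - nmul j epsQ) < \<mu> (hasse j h)"
  proof (cases "hasse j h = 0")
    case False
    obtain c where c: "c \<in> hasse_indices"
      "nmul c (fin_val h - fin_val (hasse j h)) < nmul j (fin_val Q - fin_val (hasse c Q))"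
      using key_poly_hasse_witness[OF h j False] by blast
    then have c1n: "c \<in> {1..n}"
      by (simp add: hasse_indices_def)
    have "nmul scale (fin_val h - fin_val (hasse j h)) =
        nmul (scale div c) (nmul c (fin_val h - fin_val (hasse j h)))"
      by (rule nmul_scale(2)[OF c1n])
    also have "\<dots> < nmul (scale div c) (nmul j (fin_val Q - fin_val (hasse c Q)))"
      using c(2) scale_div_pos[OF c1n] by (rule nmul_strict_mono)
    also have "\<dots> = nmul j (eps_term c)"
      by (simp add: eps_term_def nmul_nmul mult.commute)
    also have "\<dots> \<le> nmul j epsQ"
      using c(1) hasse_indices_finite by (intro nmul_mono) (simp add: epsQ_def)
    finally show ?thesis
      using scaled.val_Fin[OF False]
      by (simp add: scaled_fin_val nmul_right_diff_distrib algebra_simps)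
  qed simp
qed

lemma eps_less_Q_mult:
  assumes a: "eps_less_Q a" and b: "eps_less_Q b"
  shows "eps_less_Q (a * b)"
proof -
  have nz: "a \<noteq> 0" "b \<noteq> 0"
    using a b by (auto simp: eps_less_Q_def)
  have "Fin (scaled.fin_val (a * b) - nmul j epsQ) < \<mu> (hasse j (a * b))" if j: "1 \<le> j" for j
    unfolding hasse_mult
  proof (rule scaled.val_sum_gt)
    fix i assume i: "i \<in> {..j}"
    have split: "scaled.fin_val (a * b) - nmul j epsQ =
        (scaled.fin_val a - nmul i epsQ) + (scaled.fin_val b - nmul (j - i) epsQ)"
      using i scaled.val_mult[of a b] nmul_left_distrib[of i "j - i" epsQ]
      by (simp add: scaled.val_Fin nz algebra_simps)
    show "Fin (scaled.fin_val (a * b) - nmul j epsQ) < \<mu> (hasse i a * hasse (j - i) b)"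
    proof (cases "i = 0")
      case True
      with b j have "Fin (scaled.fin_val b - nmul (j - i) epsQ) < \<mu> (hasse (j - i) b)"
        by (simp add: eps_less_Q_def)
      with eps_less_Q_val_hasse_ge[OF a] show ?thesis
        unfolding split scaled.val_mult by (rule Fin_add_le_less)
    next
      case False
      with a have "Fin (scaled.fin_val a - nmul i epsQ) < \<mu> (hasse i a)"
        by (simp add: eps_less_Q_def)
      then show ?thesis
        unfolding split scaled.val_mult using eps_less_Q_val_hasse_ge[OF b] by (rule Fin_add_less_le)
    qed
  qed simp
  with nz show ?thesis
    by (simp add: eps_less_Q_def)
qed

lemma val_hasse_mult_Q:
  assumes q: "eps_less_Q q" and b: "\<mu> (hasse b Q) = Fin (scaled.fin_val Q - nmul b epsQ)"
  shows "\<mu> (hasse b (q * Q)) = Fin (scaled.fin_val q + scaled.fin_val Q - nmul b epsQ)"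
proof -
  define V where "V = scaled.fin_val q + scaled.fin_val Q - nmul b epsQ"
  have "{..b} = insert 0 {1..b}"
    by auto
  then have "hasse b (q * Q) = q * hasse b Q + (\<Sum>i\<in>{1..b}. hasse i q * hasse (b - i) Q)"
    by (simp add: hasse_mult)
  moreover have "\<mu> (q * hasse b Q) = Fin V"
    using q b by (simp add: V_def scaled.val_mult scaled.val_Fin eps_less_Q_def algebra_simps)
  moreover have "Fin V < \<mu> (\<Sum>i\<in>{1..b}. hasse i q * hasse (b - i) Q)"
  proof (rule scaled.val_sum_gt)
    fix i assume i: "i \<in> {1..b}"
    have split: "V = (scaled.fin_val q - nmul i epsQ) + (scaled.fin_val Q - nmul (b - i) epsQ)"
      using i nmul_left_distrib[of i "b - i" epsQ] by (simp add: V_def algebra_simps)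
    have "Fin (scaled.fin_val q - nmul i epsQ) < \<mu> (hasse i q)"
      using q i by (simp add: eps_less_Q_def)
    then show "Fin V < \<mu> (hasse i q * hasse (b - i) Q)"
      unfolding split scaled.val_mult using val_hasse_Q_ge by (rule Fin_add_less_le)
  qed simp
  ultimately show ?thesis
    by (simp add: scaled.val_add_eq_left V_def)
qed

lemma min_val_less_val_mult_Q:
  assumes hqr: "h = q * Q + r" and h: "eps_less_Q h" and q: "eps_less_Q q"
    and r: "r = 0 \<or> eps_less_Q r"
  shows "min (\<nu> h) (\<nu> r) < \<nu> (q * Q)"
proof (rule ccontr)
  assume "\<not> ?thesis"
  then have le: "\<mu> (q * Q) \<le> \<mu> f" if "f \<in> {h, r}" for f
    using that by (auto simp: \<mu>_le_iff not_less)
  obtain b where b: "1 \<le> b" "\<mu> (hasse b Q) = Fin (scaled.fin_val Q - nmul b epsQ)"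
    using ex_val_hasse_Q_eq by blast
  define V where "V = scaled.fin_val q + scaled.fin_val Q - nmul b epsQ"
  have "Fin V < \<mu> (hasse b f)" if "f \<in> {h, r}" for f
  proof (cases "f = 0")
    case False
    with that h r have "eps_less_Q f"
      by auto
    with b(1) have "Fin (scaled.fin_val f - nmul b epsQ) < \<mu> (hasse b f)"
      by (simp add: eps_less_Q_def)
    moreover have "scaled.fin_val q + scaled.fin_val Q \<le> scaled.fin_val f"
      using le[OF that] q False Q_nonzero
      by (simp add: scaled.val_mult scaled.val_Fin eps_less_Q_def)
    then have "Fin V \<le> Fin (scaled.fin_val f - nmul b epsQ)"
      by (simp add: V_def)
    ultimately show ?thesis
      by (simp only: le_less_trans)
  qed (use b(1) in \<open>simp add: hasse_eq_0\<close>)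
  then have "Fin V < min (\<mu> (hasse b h)) (\<mu> (hasse b r))"
    by simp
  also have "\<dots> \<le> \<mu> (hasse b h - hasse b r)"
    by (rule scaled.val_diff_ge_min)
  also have "\<dots> = \<mu> (hasse b (q * Q))"
    by (simp add: hqr flip: hasse_diff)
  also have "\<dots> = Fin V"
    unfolding V_def using q b(2) by (rule val_hasse_mult_Q)
  finally show False
    by simp
qed

lemma val_mod_Q:
  assumes h: "eps_less_Q h" and deg: "degree (h div Q) < n"
  shows "\<nu> (h mod Q) = \<nu> h \<and> \<nu> h < \<nu> (h div Q * Q)"
proof -
  have "min (\<nu> h) (\<nu> (h mod Q)) < \<nu> (h div Q * Q)"
  proof (cases "h div Q = 0")
    case True
    with h show ?thesis
      by (simp add: eps_less_Q_def min_less_iff_disj)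
  next
    case False
    have "h mod Q = 0 \<or> eps_less_Q (h mod Q)"
      using degree_mod_less[OF Q_nonzero, of h] eps_less_Q_if_degree_less by blast
    with h show ?thesis
      using eps_less_Q_if_degree_less[OF False deg] by (intro min_val_less_val_mult_Q) simp_all
  qed
  then show ?thesis
    using val_add_eq_of_min_less[of h "h div Q * Q" "h mod Q"] by simp
qed

lemma val_mod_Q_mult:
  assumes "a \<noteq> 0" "degree a < n" "b \<noteq> 0" "degree b < n"
  shows "\<nu> (a * b mod Q) = \<nu> (a * b) \<and> \<nu> (a * b) < \<nu> (a * b div Q * Q)"
  using assms by (intro val_mod_Q eps_less_Q_mult eps_less_Q_if_degree_less degree_mult_div_less)

lemma val_mod_Q_coeff_gt:
  assumes c: "dominant_qexp \<nu> Q c N h" and p: "p \<noteq> 0" "degree p < n"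
    and "p * h \<noteq> 0" and "0 < j"
  shows "\<nu> (p * h) < \<nu> (p * c j mod Q * Q ^ j)"
proof (cases "c j = 0")
  case False
  with c \<open>0 < j\<close> have "\<nu> h < \<nu> (c j * Q ^ j)"
    by (simp add: dominant_qexp_def)
  with p(1) have "\<nu> (p * h) < \<nu> (p * (c j * Q ^ j))"
    by (simp add: val_mult_less_cancel_left)
  moreover have "\<nu> (p * c j mod Q) = \<nu> (p * c j)"
    using val_mod_Q_mult[OF p False dominant_qexp_degree[OF c]] by blast
  ultimately show ?thesis
    by (simp add: val_mult add.assoc)
next
  case True
  with \<open>p * h \<noteq> 0\<close> show ?thesis
    by simp
qed

lemma val_div_Q_coeff_gt:
  assumes c: "dominant_qexp \<nu> Q c N h" and p: "p \<noteq> 0" "degree p < n" and "p * h \<noteq> 0"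
  shows "\<nu> (p * h) < \<nu> (p * c j div Q * Q ^ Suc j)"
proof (cases "c j = 0")
  case False
  have "\<nu> (p * h) \<le> \<nu> (p * (c j * Q ^ j))"
    using dominant_qexp_val_le[OF c] by (simp add: val_mult add_left_mono)
  also have "\<dots> = \<nu> (p * c j * Q ^ j)"
    by (simp only: mult.assoc)
  also have "\<dots> < \<nu> (p * c j div Q * Q * Q ^ j)"
    using val_mod_Q_mult[OF p False dominant_qexp_degree[OF c]] Q_nonzero
    by (simp add: val_mult_less_cancel_right)
  also have "\<dots> = \<nu> (p * c j div Q * Q ^ Suc j)"
    by (simp only: mult.assoc power_Suc)
  finally show ?thesis .
next
  case True
  with \<open>p * h \<noteq> 0\<close> show ?thesis
    by simp
qed

lemma dominant_qexp_mult:
  assumes c: "dominant_qexp \<nu> Q c N h" and p: "degree p < n"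
  shows "\<exists>d. dominant_qexp \<nu> Q d (Suc N) (p * h)"
proof (cases "p * h = 0")
  case True
  show ?thesis
    unfolding True using dominant_qexp_zero[OF degree_Q_pos] by blast
next
  case False
  then have p0: "p \<noteq> 0" and h0: "h \<noteq> 0"
    by auto
  define d where "d k = p * c k mod Q + qshift 1 (\<lambda>k. p * c k div Q) k" for k
  have exp: "is_qexp Q d (Suc N) (p * h)"
    unfolding d_def using c p by (intro is_qexp_mult) (simp_all add: dominant_qexp_def)
  have c0: "c 0 \<noteq> 0"
  proof
    assume "c 0 = 0"
    with c have "\<nu> h = Pinf"
      by (simp add: dominant_qexp_def)
    with h0 show False
      by simp
  qed
  have "\<nu> (d 0) = \<nu> (p * c 0)"
    using val_mod_Q_mult[OF p0 p c0 dominant_qexp_degree[OF c]] by (simp add: d_def qshift_def)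
  also have "\<dots> = \<nu> (p * h)"
    using c by (simp add: dominant_qexp_def val_mult)
  finally have "\<nu> (d 0) = \<nu> (p * h)" .
  moreover have "\<nu> (p * h) < \<nu> (d j * Q ^ j)" if "0 < j" for j
  proof -
    define i where "i = j - 1"
    with that have j: "j = Suc i"
      by simp
    have "\<nu> (p * h) < \<nu> (p * c j mod Q * Q ^ j)"
      by (rule val_mod_Q_coeff_gt[OF c p0 p False that])
    moreover have "\<nu> (p * h) < \<nu> (p * c i div Q * Q ^ j)"
      unfolding j by (rule val_div_Q_coeff_gt[OF c p0 p False])
    ultimately have "\<nu> (p * h) < min (\<nu> (p * c j mod Q * Q ^ j)) (\<nu> (p * c i div Q * Q ^ j))"
      by simp
    also have "\<dots> \<le> \<nu> ((p * c j mod Q + p * c i div Q) * Q ^ j)"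
      unfolding distrib_right by (rule val_add_ge_min)
    also have "p * c j mod Q + p * c i div Q = d j"
      by (simp add: d_def qshift_def j)
    finally show ?thesis .
  qed
  ultimately show ?thesis
    using exp unfolding dominant_qexp_def by blast
qed

lemma dominant_qexp_prod_list:
  "\<forall>p\<in>set ps. degree p < n \<Longrightarrow> \<exists>c N. dominant_qexp \<nu> Q c N (prod_list ps)"
proof (induction ps)
  case Nil
  then show ?case
    using dominant_qexp_const[of 1 Q \<nu>] degree_Q_pos by auto
next
  case (Cons p ps)
  then obtain c N where "dominant_qexp \<nu> Q c N (prod_list ps)"
    by auto
  moreover have "degree p < n"
    using Cons.prems by simp
  ultimately obtain d where "dominant_qexp \<nu> Q d (Suc N) (p * prod_list ps)"
    using dominant_qexp_mult by blast
  then show ?case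
    by (simp only: prod_list.Cons) blast
qed

end

theorem lemma3p3:
  fixes \<nu> :: "'a::field poly \<Rightarrow> 'g::linordered_ab_group_add extended"
    and Q f :: "'a poly" and fs :: "nat \<Rightarrow> 'a poly" and s :: nat
  assumes "krull_valuation \<nu>"
    and "key_poly \<nu> Q"
    and "degree Q > 0"
    and "f = (\<Sum>i\<le>s. fs i * Q ^ i)"
    and "\<forall>i\<le>s. fs i = 0 \<or>
           (\<exists>ps :: 'a poly list. (\<forall>p\<in>set ps. degree p < degree Q) \<and> fs i = prod_list ps)"
  shows "truncation \<nu> Q f = Min ((\<lambda>i. \<nu> (fs i * Q ^ i)) ` {..s})"
proof -
  interpret key_polynomial \<nu> Q
    using assms(1-3) by unfold_locales
  have dom: "\<exists>c N. dominant_qexp \<nu> Q c N (fs i)" if "i \<le> s" for i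
  proof (cases "fs i = 0")
    case True
    then show ?thesis
      using dominant_qexp_zero[OF degree_Q_pos] by (intro exI[of _ "\<lambda>_. 0"] exI[of _ 0]) simp
  next
    case False
    with assms(5) that obtain ps where "\<forall>p\<in>set ps. degree p < n" "fs i = prod_list ps"
      by blast
    then show ?thesis
      using dominant_qexp_prod_list[of ps] by simp
  qed
  obtain c N where "\<forall>i\<le>s. dominant_qexp \<nu> Q (c i) N (fs i)"
    using ex_dominant_qexps_common_bound[where s = s and fs = fs, OF dom] by blast
  then show ?thesis
    unfolding assms(4) by (intro truncation_sum_dominant_qexp) auto
qed
end
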